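(* For any L-primitive set $A\subset\mathbb{Z}_{>1}$, the logarithmic density $\delta(\mathrm{L}_A)=\lim_{x\to\infty}\frac{1}{\log x}\sum_{n\in\mathrm{L}_A,\,n\le x}\frac1n$ exists and equals $\sum_{a\in A}\mathrm{d}(\mathrm{L}_a)$.
   Context: For an integer $a>1$ with largest prime factor $P(a)$, $\mathrm{L}_a=\{ba: b\in\mathbb{N},\ \text{every prime } p\mid b \text{ satisfies } p\ge P(a)\}$, with natural density $\mathrm{d}(\mathrm{L}_a)=\frac1a\prod_{p<P(a)}(1-\frac1p)$; $\mathrm{L}_A=\bigcup_{a\in A}\mathrm{L}_a$. A set $A\subset\mathbb{Z}_{>1}$ is L-primitive if $a'\notin\mathrm{L}_a$ for all distinct $a,a'\in A$. *)

theory Defs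
  imports "HOL-Analysis.Analysis" "HOL-Computational_Algebra.Primes"
begin

definition gpf :: "nat \<Rightarrow> nat" where
  "gpf a = Max (prime_factors a)"

definition Lset :: "nat \<Rightarrow> nat set" where
  "Lset a = {b * a | b. b \<ge> 1 \<and> (\<forall>p. prime p \<and> p dvd b \<longrightarrow> p \<ge> gpf a)}"

definition LsetA :: "nat set \<Rightarrow> nat set" where
  "LsetA A = (\<Union>a\<in>A. Lset a)"

text \<open>Natural density of L_a, as given by the closed formula.\<close>
definition dL :: "nat \<Rightarrow> real" where
  "dL a = (1 / real a) * (\<Prod>p\<in>{p. prime p \<and> p < gpf a}. (1 - 1 / real p))"

definition L_primitive :: "nat set \<Rightarrow> bool" where
  "L_primitive A \<longleftrightarrow> (\<forall>a\<in>A. \<forall>a'\<in>A. a \<noteq> a' \<longrightarrow> a' \<notin> Lset a)"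

end

theory Submission
  imports Defs "HOL-Real_Asymp.Real_Asymp"
begin

(*
  Writing n in L_a as b a, the elements of L_a up to x correspond to the integers b <= x/a
  free of primes below P(a). Sieving these primes out one at a time shows that their
  harmonic sum is asymptotic to prod_{p < P(a)} (1 - 1/p) log x, so L_a alone has
  logarithmic density d(L_a). Two sets L_a that meet are nested, so for an L-primitive A
  they are pairwise disjoint, the logarithmic sum over L_A splits into the sums over the
  L_a, and the claim becomes an interchange of limit and summation. Tannery's theorem
  justifies it: an Euler product bound together with the Mertens-type estimate
  prod_{p <= x} (1 - 1/p)^-1 <= e^4 (1 + log x), obtained by Rankin's trick from a
  Chebyshev bound, dominates the a-th term by 2 e^4 d(L_a) uniformly in x, and the d(L_a)
  are summable because each finite partial sum is a limit of quantities at most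
  1 + 1/log x.
*)

section \<open>Harmonic sums over sifted integers\<close>

definition sifted :: "nat set \<Rightarrow> real \<Rightarrow> nat set" where
  "sifted Q y = {b. 0 < b \<and> real b \<le> y \<and> (\<forall>q\<in>Q. \<not> q dvd b)}"

definition sifted_harmonic :: "nat set \<Rightarrow> real \<Rightarrow> real" where
  "sifted_harmonic Q y = (\<Sum>b\<in>sifted Q y. 1 / real b)"

lemma finite_nat_le_real: "finite {n::nat. P n \<and> real n \<le> y}"
  by (rule finite_subset[of _ "{..nat \<lfloor>y\<rfloor>}"]) (auto simp: le_nat_floor)

lemma le_nat_floor_iff: "y \<ge> 0 \<Longrightarrow> n \<le> nat \<lfloor>y\<rfloor> \<longleftrightarrow> real n \<le> y"
  by (simp add: le_nat_iff le_floor_iff)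

lemma finite_sifted: "finite (sifted Q y)"
  using finite_nat_le_real[of "\<lambda>b. 0 < b \<and> (\<forall>q\<in>Q. \<not> q dvd b)" y]
  unfolding sifted_def by (simp add: conj_ac)

lemma sifted_harmonic_mono: "y \<le> z \<Longrightarrow> sifted_harmonic Q y \<le> sifted_harmonic Q z"
  unfolding sifted_harmonic_def
  by (intro sum_mono2 finite_sifted) (auto simp: sifted_def)

lemma sifted_harmonic_empty: "sifted_harmonic {} y = harm (nat \<lfloor>y\<rfloor>)"
proof -
  have "sifted {} y = {1..nat \<lfloor>y\<rfloor>}"
    by (auto simp: sifted_def le_nat_floor) linarith
  then show ?thesis
    by (simp add: sifted_harmonic_def harm_def inverse_eq_divide)
qed

lemma harm_le_1_plus_ln: "n \<ge> 1 \<Longrightarrow> harm n \<le> 1 + ln (real n)"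
proof -
  assume "n \<ge> 1"
  then obtain m where "n = Suc m" by (cases n) auto
  moreover have "harm (Suc m) - ln (Suc m) \<le> harm (Suc 0) - ln (Suc 0)"
    using decseq_harm_diff_ln unfolding decseq_def by blast
  ultimately show ?thesis by (simp add: harm_Suc harm_def)
qed

lemma sifted_harmonic_empty_bounds:
  assumes "y \<ge> 1"
  shows "ln y \<le> sifted_harmonic {} y" "sifted_harmonic {} y \<le> 1 + ln y"
proof -
  have n: "nat \<lfloor>y\<rfloor> \<ge> 1" "real (nat \<lfloor>y\<rfloor>) \<le> y" "y \<le> real (nat \<lfloor>y\<rfloor>) + 1"
    using assms by linarith+
  have "ln y \<le> ln (real (nat \<lfloor>y\<rfloor>) + 1)"
    using n assms by simp
  also have "\<dots> \<le> harm (nat \<lfloor>y\<rfloor>)" by (rule ln_le_harm)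
  finally show "ln y \<le> sifted_harmonic {} y" by (simp add: sifted_harmonic_empty)
  have "harm (nat \<lfloor>y\<rfloor>) \<le> 1 + ln (real (nat \<lfloor>y\<rfloor>))" using harm_le_1_plus_ln n(1) .
  also have "\<dots> \<le> 1 + ln y" using n assms by simp
  finally show "sifted_harmonic {} y \<le> 1 + ln y" by (simp add: sifted_harmonic_empty)
qed

lemma sifted_harmonic_empty_asymp: "((\<lambda>y. sifted_harmonic {} y / ln y) \<longlongrightarrow> 1) at_top"
proof (rule tendsto_sandwich[of "\<lambda>_. 1" _ _ "\<lambda>y. 1 + 1 / ln y"])
  show "\<forall>\<^sub>F y in at_top. 1 \<le> sifted_harmonic {} y / ln y"
    using eventually_gt_at_top[of 1]
    by eventually_elim (simp add: sifted_harmonic_empty_bounds)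
  show "\<forall>\<^sub>F y in at_top. sifted_harmonic {} y / ln y \<le> 1 + 1 / ln y"
    using eventually_gt_at_top[of 1]
    by eventually_elim (use sifted_harmonic_empty_bounds in \<open>simp add: field_simps\<close>)
  show "((\<lambda>y::real. 1 + 1 / ln y) \<longlongrightarrow> (1::real)) at_top" by real_asymp
qed simp

lemma sifted_insert:
  assumes "\<forall>p\<in>Q. prime p" "prime q" "q \<notin> Q"
  shows "sifted Q y = sifted (insert q Q) y \<union> (\<lambda>m. q * m) ` sifted Q (y / q)"
proof (intro equalityI subsetI)
  fix b
  assume b: "b \<in> sifted Q y"
  show "b \<in> sifted (insert q Q) y \<union> (\<lambda>m. q * m) ` sifted Q (y / q)"
  proof (cases "q dvd b")
    case True
    then obtain m where m: "b = q * m" by blast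
    have "real q > 0" using assms(2) prime_gt_0_nat by simp
    with b m have "m \<in> sifted Q (y / q)" by (auto simp: sifted_def field_simps)
    with m show ?thesis by blast
  next
    case False
    with b have "b \<in> sifted (insert q Q) y" by (simp add: sifted_def)
    then show ?thesis by blast
  qed
next
  fix b
  assume "b \<in> sifted (insert q Q) y \<union> (\<lambda>m. q * m) ` sifted Q (y / q)"
  then consider "b \<in> sifted (insert q Q) y" | m where "m \<in> sifted Q (y / q)" "b = q * m"
    by blast
  then show "b \<in> sifted Q y"
  proof cases
    case 1
    then show ?thesis by (simp add: sifted_def)
  next
    case 2
    have "\<not> p dvd q * m" if p: "p \<in> Q" for p
    proof
      assume "p dvd q * m"
      moreover have "\<not> p dvd m" using 2 p by (simp add: sifted_def)
      moreover have "p \<noteq> q" using p assms(3) by blast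
      ultimately show False
        using p assms primes_dvd_imp_eq prime_dvd_mult_iff by metis
    qed
    moreover have "real q > 0" using assms(2) prime_gt_0_nat by simp
    ultimately show ?thesis
      using 2 by (simp add: sifted_def field_simps)
  qed
qed

lemma sifted_harmonic_insert:
  assumes "\<forall>p\<in>Q. prime p" "prime q" "q \<notin> Q"
  shows "sifted_harmonic (insert q Q) y = sifted_harmonic Q y - sifted_harmonic Q (y / q) / q"
proof -
  have q: "q > 0" using assms(2) prime_gt_0_nat by simp
  have disjoint: "sifted (insert q Q) y \<inter> (\<lambda>m. q * m) ` sifted Q (y / q) = {}"
    by (auto simp: sifted_def)
  have "sifted_harmonic Q y
      = sifted_harmonic (insert q Q) y + (\<Sum>b\<in>(\<lambda>m. q * m) ` sifted Q (y / q). 1 / real b)"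
    unfolding sifted_harmonic_def sifted_insert[OF assms, of y]
    by (intro sum.union_disjoint finite_sifted finite_imageI disjoint)
  also have "(\<Sum>b\<in>(\<lambda>m. q * m) ` sifted Q (y / q). 1 / real b) = sifted_harmonic Q (y / q) / q"
    using q by (subst sum.reindex)
      (auto simp: inj_on_def sifted_harmonic_def sum_divide_distrib mult.commute)
  finally show ?thesis by simp
qed

lemma tendsto_over_ln_rescale:
  fixes f :: "real \<Rightarrow> real"
  assumes f: "((\<lambda>y. f y / ln y) \<longlongrightarrow> L) at_top" and c: "c > 0"
  shows "((\<lambda>y. f (y / c) / ln y) \<longlongrightarrow> L) at_top"
proof -
  have "filterlim (\<lambda>y. y / c) at_top at_top" using c by real_asymp
  then have "((\<lambda>y. f (y / c) / ln (y / c)) \<longlongrightarrow> L) at_top"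
    using filterlim_compose[OF f] by blast
  moreover have "((\<lambda>y. ln (y / c) / ln y) \<longlongrightarrow> 1) at_top" using c by real_asymp
  ultimately have "((\<lambda>y. f (y / c) / ln (y / c) * (ln (y / c) / ln y)) \<longlongrightarrow> L) at_top"
    using tendsto_mult by fastforce
  moreover have "\<forall>\<^sub>F y in at_top. f (y / c) / ln (y / c) * (ln (y / c) / ln y) = f (y / c) / ln y"
    using eventually_gt_at_top[of "max 1 c"]
  proof eventually_elim
    case (elim y)
    then have "ln (y / c) > 0" using c by (simp add: field_simps)
    then show ?case by simp
  qed
  ultimately show ?thesis by (rule Lim_transform_eventually)
qed

lemma sifted_harmonic_asymp:
  assumes "finite Q" "\<forall>p\<in>Q. prime p"
  shows "((\<lambda>y. sifted_harmonic Q y / ln y) \<longlongrightarrow> (\<Prod>p\<in>Q. 1 - 1 / real p)) at_top"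
  using assms
proof (induction Q rule: finite_induct)
  case empty
  then show ?case using sifted_harmonic_empty_asymp by simp
next
  case (insert q Q)
  let ?L = "\<Prod>p\<in>Q. 1 - 1 / real p"
  have q: "q > 0" using insert.prems prime_gt_0_nat by simp
  have IH: "((\<lambda>y. sifted_harmonic Q y / ln y) \<longlongrightarrow> ?L) at_top"
    using insert by simp
  have "((\<lambda>y. sifted_harmonic Q y / ln y - sifted_harmonic Q (y / q) / ln y / q)
      \<longlongrightarrow> ?L - ?L / q) at_top"
    by (intro tendsto_intros IH tendsto_over_ln_rescale) (use q in auto)
  moreover have "sifted_harmonic Q y / ln y - sifted_harmonic Q (y / q) / ln y / q
      = sifted_harmonic (insert q Q) y / ln y" for y
    using insert by (simp add: sifted_harmonic_insert diff_divide_distrib)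
  moreover have "?L - ?L / q = (\<Prod>p\<in>insert q Q. 1 - 1 / real p)"
    using insert by (simp add: algebra_simps)
  ultimately show ?case by simp
qed

section \<open>Truncated Euler products\<close>

lemma multiplicative_prod_prime_powers:
  fixes f :: "nat \<Rightarrow> 'a :: comm_monoid_mult"
  assumes mult: "\<And>m n. f (m * n) = f m * f n" and one: "f 1 = 1"
  shows "f (\<Prod>p\<in>Q. p ^ e p) = (\<Prod>p\<in>Q. f p ^ e p)"
proof -
  have power: "f (p ^ k) = f p ^ k" for p k
    by (induction k) (simp_all add: mult one[unfolded One_nat_def])
  show ?thesis
    by (induction Q rule: infinite_finite_induct)
      (simp_all add: one[unfolded One_nat_def] mult power)
qed

lemma inj_on_prod_prime_powers:
  fixes Q :: "nat set"
  assumes "finite Q" "\<forall>p\<in>Q. prime p"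
  shows "inj_on (\<lambda>e. \<Prod>p\<in>Q. p ^ e p) (PiE Q B)"
proof (rule inj_onI)
  fix e e' assume e: "e \<in> PiE Q B" "e' \<in> PiE Q B"
    and eq: "(\<Prod>p\<in>Q. p ^ e p) = (\<Prod>p\<in>Q. p ^ e' p)"
  have "e p = e' p" if "p \<in> Q" for p
    using arg_cong[OF eq, of "multiplicity p"] that assms
    by (simp add: multiplicity_prod_prime_powers)
  with e show "e = e'" by (auto intro: PiE_ext)
qed

lemma prod_prime_powers_multiplicity:
  fixes n :: nat
  assumes "finite Q" "\<forall>p\<in>Q. prime p" "n > 0" "prime_factors n \<subseteq> Q"
  shows "(\<Prod>p\<in>Q. p ^ multiplicity p n) = n"
proof (rule multiplicity_eq_nat)
  show "(\<Prod>p\<in>Q. p ^ multiplicity p n) > 0"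
    using assms(2) prime_gt_0_nat by (intro prod_pos) auto
  fix r :: nat assume r: "prime r"
  have "multiplicity r n = 0" if "r \<notin> Q"
    using that r assms(3,4) by (auto intro!: not_dvd_imp_multiplicity_0 simp: in_prime_factors_iff)
  then show "multiplicity r (\<Prod>p\<in>Q. p ^ multiplicity p n) = multiplicity r n"
    using assms(1,2) r by (simp add: multiplicity_prod_prime_powers)
qed (use assms in auto)

lemma multiplicity_less_self:
  assumes "prime (p :: nat)" "n > 0"
  shows "multiplicity p n < n"
proof (rule multiplicity_lessI)
  have "n < 2 ^ n" by simp
  also have "\<dots> \<le> p ^ n" using assms(1) prime_ge_2_nat by (intro power_mono) auto
  finally show "\<not> p ^ n dvd n" using assms(2) by (auto dest: dvd_imp_le)
qed (use assms in auto)

lemma truncated_euler_product: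
  fixes f :: "nat \<Rightarrow> 'a :: comm_semiring_1"
  assumes "finite Q" "\<forall>p\<in>Q. prime p"
    and mult: "\<And>m n. f (m * n) = f m * f n" and one: "f 1 = 1"
  shows "(\<Prod>p\<in>Q. \<Sum>k<K. f p ^ k) = (\<Sum>n\<in>(\<lambda>e. \<Prod>p\<in>Q. p ^ e p) ` PiE Q (\<lambda>_. {..<K}). f n)"
proof -
  have "(\<Prod>p\<in>Q. \<Sum>k<K. f p ^ k) = (\<Sum>e\<in>PiE Q (\<lambda>_. {..<K}). \<Prod>p\<in>Q. f p ^ e p)"
    using assms(1) by (rule prod_sum_PiE) simp
  also have "\<dots> = (\<Sum>e\<in>PiE Q (\<lambda>_. {..<K}). f (\<Prod>p\<in>Q. p ^ e p))"
    by (simp add: multiplicative_prod_prime_powers[OF mult one])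
  also have "\<dots> = (\<Sum>n\<in>(\<lambda>e. \<Prod>p\<in>Q. p ^ e p) ` PiE Q (\<lambda>_. {..<K}). f n)"
    by (rule sum.reindex[OF inj_on_prod_prime_powers[OF assms(1,2)], symmetric, unfolded comp_def])
  finally show ?thesis .
qed

lemma sum_le_euler_product:
  fixes f :: "nat \<Rightarrow> real"
  assumes Q: "finite Q" "\<forall>p\<in>Q. prime p"
    and mult: "\<And>m n. f (m * n) = f m * f n" and one: "f 1 = 1"
    and nonneg: "\<And>n. f n \<ge> 0" and less_one: "\<And>p. p \<in> Q \<Longrightarrow> f p < 1"
    and B: "finite B" "\<And>n. n \<in> B \<Longrightarrow> n > 0 \<and> prime_factors n \<subseteq> Q"
  shows "(\<Sum>n\<in>B. f n) \<le> (\<Prod>p\<in>Q. 1 / (1 - f p))"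
proof -
  define K where "K = Suc (Max (insert 0 B))"
  have "B \<subseteq> (\<lambda>e. \<Prod>p\<in>Q. p ^ e p) ` PiE Q (\<lambda>_. {..<K})"
  proof
    fix n assume n: "n \<in> B"
    have "multiplicity p n < K" if "p \<in> Q" for p
    proof -
      have "multiplicity p n < n" using that Q(2) B(2)[OF n] by (simp add: multiplicity_less_self)
      also have "n < K" using n B(1) by (simp add: K_def le_imp_less_Suc)
      finally show ?thesis .
    qed
    then have "restrict (\<lambda>p. multiplicity p n) Q \<in> PiE Q (\<lambda>_. {..<K})" by simp
    moreover have "n = (\<Prod>p\<in>Q. p ^ restrict (\<lambda>p. multiplicity p n) Q p)"
      using prod_prime_powers_multiplicity[OF Q] B(2)[OF n] by simp
    ultimately show "n \<in> (\<lambda>e. \<Prod>p\<in>Q. p ^ e p) ` PiE Q (\<lambda>_. {..<K})"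
      by blast
  qed
  then have "(\<Sum>n\<in>B. f n) \<le> (\<Sum>n\<in>(\<lambda>e. \<Prod>p\<in>Q. p ^ e p) ` PiE Q (\<lambda>_. {..<K}). f n)"
    using Q(1) by (intro sum_mono2 finite_imageI finite_PiE nonneg) auto
  also have "\<dots> = (\<Prod>p\<in>Q. \<Sum>k<K. f p ^ k)"
    by (rule truncated_euler_product[OF Q mult one, symmetric])
  also have "\<dots> \<le> (\<Prod>p\<in>Q. 1 / (1 - f p))"
  proof (intro prod_mono conjI)
    fix p assume p: "p \<in> Q"
    show "0 \<le> (\<Sum>k<K. f p ^ k)" using nonneg by (intro sum_nonneg) simp
    have "(\<Sum>k<K. f p ^ k) = (1 - f p ^ K) / (1 - f p)"
      using less_one[OF p] by (simp add: sum_gp_strict)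
    also have "\<dots> \<le> 1 / (1 - f p)"
      using less_one[OF p] nonneg[of p] by (intro divide_right_mono) auto
    finally show "(\<Sum>k<K. f p ^ k) \<le> 1 / (1 - f p)" .
  qed
  finally show ?thesis .
qed

lemma powr_diff_ge:
  fixes s t :: real
  assumes "s > 1" "t > 1"
  shows "(s - 1) * t powr (- s) \<le> (t - 1) powr (1 - s) - t powr (1 - s)"
proof -
  have "((\<lambda>u. u powr (1 - s)) has_real_derivative (1 - s) * u powr (- s)) (at u)"
    if "t - 1 \<le> u" for u
    using has_real_derivative_powr[of u "1 - s"] that assms(2) by simp
  then obtain z where z: "t - 1 < z" "z < t"
    and eq: "t powr (1 - s) - (t - 1) powr (1 - s) = (t - (t - 1)) * ((1 - s) * z powr (- s))"
    using MVT2[of "t - 1" t "\<lambda>u. u powr (1 - s)" "\<lambda>u. (1 - s) * u powr (- s)"] by auto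
  have "t powr (- s) \<le> z powr (- s)"
    using z assms by (intro powr_mono2') auto
  then have "(s - 1) * t powr (- s) \<le> (s - 1) * z powr (- s)"
    using assms(1) by (intro mult_left_mono) auto
  with eq show ?thesis by (simp add: algebra_simps)
qed

lemma sum_powr_neg_le:
  fixes s :: real
  assumes "s > 1" "N \<ge> 1"
  shows "(\<Sum>n=1..N. real n powr (- s)) \<le> s / (s - 1) - real N powr (1 - s) / (s - 1)"
  using assms(2)
proof (induction N rule: dec_induct)
  case base
  show ?case using assms(1) by (simp add: diff_divide_distrib[symmetric])
next
  case (step N)
  have "real (Suc N) powr (- s) \<le> (real N powr (1 - s) - real (Suc N) powr (1 - s)) / (s - 1)"
    using powr_diff_ge[of s "real (Suc N)"] assms(1) step(1) by (simp add: field_simps)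
  with step show ?case by (simp add: diff_divide_distrib)
qed

lemma sum_powr_neg_le_zeta:
  fixes s :: real
  assumes "s > 1" "finite M" "0 \<notin> M"
  shows "(\<Sum>n\<in>M. real n powr (- s)) \<le> s / (s - 1)"
proof -
  define N where "N = Max (insert 1 M)"
  have "M \<subseteq> {1..N}"
  proof
    fix n assume "n \<in> M"
    with assms(2,3) show "n \<in> {1..N}" by (cases n) (auto simp: N_def)
  qed
  then have "(\<Sum>n\<in>M. real n powr (- s)) \<le> (\<Sum>n=1..N. real n powr (- s))"
    by (intro sum_mono2) auto
  also have "\<dots> \<le> s / (s - 1) - real N powr (1 - s) / (s - 1)"
    using assms(1,2) by (intro sum_powr_neg_le) (auto simp: N_def)
  also have "\<dots> \<le> s / (s - 1)" using assms(1) by simp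
  finally show ?thesis .
qed

lemma euler_product_le_zeta:
  fixes s :: real
  assumes Q: "finite Q" "\<forall>p\<in>Q. prime p" and s: "s > 1"
  shows "(\<Prod>p\<in>Q. 1 / (1 - real p powr (- s))) \<le> s / (s - 1)"
proof -
  define f where "f n = real n powr (- s)" for n
  have mult: "f (m * n) = f m * f n" for m n by (simp add: f_def powr_mult)
  have one: "f 1 = 1" by (simp add: f_def)
  have less_one: "f p < 1" if "p \<in> Q" for p
  proof -
    have "real p > 1" using Q(2) that prime_gt_1_nat by auto
    then show ?thesis using s by (simp add: f_def powr_less_one)
  qed
  have "(\<lambda>K. \<Prod>p\<in>Q. \<Sum>k<K. f p ^ k) \<longlonglongrightarrow> (\<Prod>p\<in>Q. 1 / (1 - f p))"
  proof (intro tendsto_prod)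
    fix p assume "p \<in> Q"
    then have "(\<lambda>k. f p ^ k) sums (1 / (1 - f p))"
      using less_one by (intro geometric_sums) (auto simp: f_def)
    then show "(\<lambda>K. \<Sum>k<K. f p ^ k) \<longlonglongrightarrow> 1 / (1 - f p)" by (simp add: sums_def)
  qed
  moreover have "(\<Prod>p\<in>Q. \<Sum>k<K. f p ^ k) \<le> s / (s - 1)" for K
  proof -
    have "(\<Prod>p\<in>Q. p ^ e p) > 0" for e
      using Q(2) prime_gt_0_nat by (intro prod_pos) auto
    then have "0 \<notin> (\<lambda>e. \<Prod>p\<in>Q. p ^ e p) ` PiE Q (\<lambda>_. {..<K})"
      by (metis (no_types, lifting) image_iff less_irrefl)
    then show ?thesis
      unfolding truncated_euler_product[OF Q mult one] unfolding f_def
      using Q(1) by (intro sum_powr_neg_le_zeta s finite_imageI finite_PiE) auto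
  qed
  ultimately show ?thesis
    unfolding f_def by (intro LIMSEQ_le_const2) auto
qed

section \<open>A Mertens-type bound for sifted harmonic sums\<close>

lemma prime_power_dvd_fact: "(p :: nat) > 0 \<Longrightarrow> p ^ (n div p) dvd fact n"
proof -
  assume p: "p > 0"
  have "p ^ k dvd fact (p * k)" for k
  proof (induction k)
    case (Suc k)
    define m where "m = p * k + p - 1"
    have m: "p * Suc k = Suc m" using p by (simp add: m_def)
    have "fact (p * k) dvd (fact m :: nat)" using p by (intro fact_dvd) (simp add: m_def)
    with Suc.IH have "p ^ k dvd (fact m :: nat)" by (rule dvd_trans)
    then have "p * p ^ k dvd Suc m * (fact m :: nat)"
      using m by (intro mult_dvd_mono) (metis dvd_triv_left)
    then show ?case using m by (simp add: fact_Suc)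
  qed simp
  moreover have "fact (p * (n div p)) dvd (fact n :: nat)" by (intro fact_dvd) simp
  ultimately show ?thesis by (rule dvd_trans)
qed

lemma half_quotient_le_div:
  fixes n p :: nat
  assumes "0 < p" "p \<le> n"
  shows "real n / (2 * real p) \<le> real (n div p)"
proof -
  have "p \<le> p * (n div p)" using assms by (simp add: Suc_le_eq div_greater_zero_iff)
  moreover have "n = p * (n div p) + n mod p" by simp
  moreover have "n mod p < p" using assms(1) by simp
  ultimately have "n \<le> 2 * p * (n div p)" by linarith
  then have "real n \<le> 2 * real p * real (n div p)"
    by (metis of_nat_le_iff of_nat_mult of_nat_numeral)
  then show ?thesis using assms(1) by (simp add: field_simps)
qed

lemma sum_ln_prime_over_prime_le:
  assumes n: "n \<ge> 1"
  shows "(\<Sum>p | prime p \<and> p \<le> n. ln (real p) / real p) \<le> 2 * ln (real n)"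
proof -
  define P where "P = {p. prime p \<and> p \<le> n}"
  have P: "finite P" "\<forall>p\<in>P. prime p" unfolding P_def by auto
  define D where "D = (\<Prod>p\<in>P. p ^ (n div p))"
  have D_pos: "D > 0" unfolding D_def using P(2) prime_gt_0_nat by (intro prod_pos) auto
  have "D dvd fact n"
  proof (rule multiplicity_le_imp_dvd)
    fix q :: nat assume q: "prime q"
    have "n div q \<le> multiplicity q (fact n)" if "q \<in> P"
      using q prime_gt_0_nat by (intro multiplicity_geI prime_power_dvd_fact) auto
    then show "multiplicity q D \<le> multiplicity q (fact n)"
      using P q by (simp add: D_def multiplicity_prod_prime_powers)
  qed (use D_pos in simp)
  then have "D \<le> fact n" by (intro dvd_imp_le) auto
  also have "fact n \<le> n ^ n" by (rule fact_le_power[where 'a = nat, simplified])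
  finally have "real D \<le> real n ^ n" by (metis of_nat_le_iff of_nat_power)
  then have "ln (real D) \<le> real n * ln (real n)"
    using D_pos n by (simp add: ln_le_cancel_iff ln_realpow[symmetric])
  moreover have "ln (real D) = (\<Sum>p\<in>P. real (n div p) * ln (real p))"
    unfolding D_def of_nat_prod of_nat_power using P prime_gt_0_nat
    by (subst ln_prod) (auto simp: ln_realpow)
  moreover have "(\<Sum>p\<in>P. real n / (2 * real p) * ln (real p)) \<le> (\<Sum>p\<in>P. real (n div p) * ln (real p))"
    using prime_gt_0_nat
    by (intro sum_mono mult_right_mono half_quotient_le_div) (auto simp: P_def Suc_le_eq)
  ultimately have "real n / 2 * (\<Sum>p\<in>P. ln (real p) / real p) \<le> real n * ln (real n)"
    by (simp add: sum_distrib_left field_simps)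
  then show ?thesis using n by (simp add: P_def field_simps)
qed

lemma inverse_one_minus_le:
  fixes x u :: real
  assumes x: "0 < x" "x \<le> 1 / 2" and u: "u \<ge> 0"
  shows "1 / (1 - x) \<le> 1 / (1 - x * exp (- u)) * exp (2 * x * u)"
proof -
  define e where "e = exp (- u)"
  define E where "E = exp (2 * x * u)"
  have "e \<ge> 1 - u" using exp_ge_add_one_self[of "- u"] by (simp add: e_def)
  then have "x * e \<ge> x * (1 - u)" using x by (intro mult_left_mono) auto
  moreover have "(1 - x) * E \<ge> (1 - x) * (1 + 2 * x * u)"
    using x unfolding E_def by (intro mult_left_mono exp_ge_add_one_self) auto
  moreover have "(1 - x) * (2 * x * u) \<ge> x * u"
    using x u mult_right_mono[of 1 "2 * (1 - x)" "x * u"] by (simp add: algebra_simps)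
  ultimately have "1 - x * e \<le> (1 - x) * E"
    by (simp add: algebra_simps)
  moreover have "x * e \<le> x"
    using x u by (intro mult_left_le) (auto simp: e_def)
  then have "1 - x * e > 0" using x by linarith
  ultimately have "1 / (1 - x) \<le> E / (1 - x * e)"
    using x by (simp add: field_simps)
  then show ?thesis by (simp add: e_def E_def)
qed

lemma inverse_one_minus_inverse_le:
  fixes t L :: real
  assumes t: "t \<ge> 2" and L: "L > 0"
  shows "1 / (1 - 1 / t) \<le> 1 / (1 - t powr (- (1 + 1 / L))) * exp (2 * (ln t / t) / L)"
proof -
  define u where "u = ln t / L"
  have "t powr (- (1 + 1 / L)) = exp (- ln t - u)"
    using t by (simp add: powr_def u_def field_simps)
  also have "\<dots> = 1 / t * exp (- u)"
    using t by (simp add: exp_diff exp_minus field_simps)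
  finally have "t powr (- (1 + 1 / L)) = 1 / t * exp (- u)" .
  moreover have "2 * (ln t / t) / L = 2 * (1 / t) * u"
    by (simp add: u_def)
  moreover have "u \<ge> 0" using t L by (simp add: u_def)
  ultimately show ?thesis using inverse_one_minus_le[of "1 / t" u] t by simp
qed

lemma prod_primes_inverse_le_ln:
  fixes z :: real
  assumes z: "z \<ge> 2"
  shows "(\<Prod>p | prime p \<and> real p \<le> z. 1 / (1 - 1 / real p)) \<le> exp 4 * (1 + ln z)"
proof -
  \<comment> \<open>Rankin's trick: compare with the Euler product of zeta at s = 1 + 1 / ln z; the
    correction factors multiply to exp (2 / ln z * (SUM p. ln p / p)) \<le> exp 4 by Chebyshev.\<close>
  define L where "L = ln z"
  have L: "L > 0" using z by (simp add: L_def)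
  define s where "s = 1 + 1 / L"
  have s: "s > 1" using L by (simp add: s_def)
  define Q where "Q = {p. prime p \<and> real p \<le> z}"
  have Q_eq: "Q = {p. prime p \<and> p \<le> nat \<lfloor>z\<rfloor>}"
    using z by (auto simp: Q_def le_nat_floor_iff)
  have Q: "finite Q" "\<forall>p\<in>Q. prime p" by (auto simp: Q_eq)
  have "(\<Prod>p\<in>Q. 1 / (1 - 1 / real p))
      \<le> (\<Prod>p\<in>Q. 1 / (1 - real p powr (- s)) * exp (2 * (ln (real p) / real p) / L))"
  proof (intro prod_mono conjI)
    fix p assume "p \<in> Q"
    then have p: "real p \<ge> 2" using Q(2) prime_ge_2_nat by auto
    then show "0 \<le> 1 / (1 - 1 / real p)" by (simp add: field_simps)
    show "1 / (1 - 1 / real p) \<le> 1 / (1 - real p powr (- s)) * exp (2 * (ln (real p) / real p) / L)"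
      unfolding s_def using inverse_one_minus_inverse_le[OF p L] .
  qed
  also have "\<dots> = (\<Prod>p\<in>Q. 1 / (1 - real p powr (- s))) * exp (2 / L * (\<Sum>p\<in>Q. ln (real p) / real p))"
    unfolding prod.distrib exp_sum[OF Q(1), symmetric] by (simp add: sum_distrib_left mult.commute)
  also have "\<dots> \<le> (1 + L) * exp 4"
  proof (intro mult_mono)
    have "(\<Prod>p\<in>Q. 1 / (1 - real p powr (- s))) \<le> s / (s - 1)"
      using euler_product_le_zeta[OF Q s] .
    also have "s / (s - 1) = 1 + L" using L by (simp add: s_def field_simps)
    finally show "(\<Prod>p\<in>Q. 1 / (1 - real p powr (- s))) \<le> 1 + L" .
    have "(\<Sum>p\<in>Q. ln (real p) / real p) \<le> 2 * ln (real (nat \<lfloor>z\<rfloor>))"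
      unfolding Q_eq using z by (intro sum_ln_prime_over_prime_le) linarith
    also have "\<dots> \<le> 2 * L" using z by (simp add: L_def)
    finally have "2 / L * (\<Sum>p\<in>Q. ln (real p) / real p) \<le> 4"
      using L by (simp add: field_simps)
    then show "exp (2 / L * (\<Sum>p\<in>Q. ln (real p) / real p)) \<le> exp 4" by simp
  qed (use L in auto)
  finally show ?thesis by (simp add: Q_def L_def mult.commute)
qed

lemma one_minus_inverse_prime_nonneg: "prime p \<Longrightarrow> 0 \<le> 1 - 1 / real p"
  using prime_gt_0_nat[of p] by (simp add: field_simps)

lemma sum_recip_le_euler_product:
  assumes "finite Q" "\<forall>p\<in>Q. prime p" "finite B" "\<And>n. n \<in> B \<Longrightarrow> n > 0 \<and> prime_factors n \<subseteq> Q"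
  shows "(\<Sum>n\<in>B. 1 / real n) \<le> (\<Prod>p\<in>Q. 1 / (1 - 1 / real p))"
proof (rule sum_le_euler_product[OF assms(1,2) _ _ _ _ assms(3,4)])
  fix p assume "p \<in> Q"
  then have "real p \<ge> 2" using assms(2) prime_ge_2_nat by auto
  then show "1 / real p < 1" by simp
qed auto

lemma sifted_harmonic_le_euler_product:
  "sifted_harmonic {p. prime p \<and> p < P} y
    \<le> (\<Prod>p | prime p \<and> P \<le> p \<and> real p \<le> y. 1 / (1 - 1 / real p))"
  unfolding sifted_harmonic_def
proof (rule sum_recip_le_euler_product)
  show "finite {p. prime p \<and> P \<le> p \<and> real p \<le> y}"
    using finite_nat_le_real[of "\<lambda>p. prime p \<and> P \<le> p" y] by (simp add: conj_ac)
  fix n assume n: "n \<in> sifted {p. prime p \<and> p < P} y"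
  have "p \<in> {p. prime p \<and> P \<le> p \<and> real p \<le> y}" if p: "p \<in> prime_factors n" for p
  proof -
    have "prime p" "p dvd n" "n > 0" using p n by (auto simp: sifted_def)
    then have "p \<le> n" "\<not> p < P" using n by (auto simp: sifted_def dest: dvd_imp_le)
    then show ?thesis using \<open>prime p\<close> n by (auto simp: sifted_def)
  qed
  then show "n > 0 \<and> prime_factors n \<subseteq> {p. prime p \<and> P \<le> p \<and> real p \<le> y}"
    using n by (auto simp: sifted_def)
qed (use finite_sifted in auto)

lemma sifted_harmonic_le_ln:
  assumes "y \<ge> 2" "real P \<le> y"
  shows "sifted_harmonic {p. prime p \<and> p < P} y
    \<le> exp 4 * (1 + ln y) * (\<Prod>p | prime p \<and> p < P. 1 - 1 / real p)"
proof -
  let ?f = "\<lambda>p. 1 / (1 - 1 / real p)"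
  have fin: "finite {p. prime p \<and> real p \<le> y}"
    using finite_nat_le_real[of prime y] .
  have split: "{p. prime p \<and> real p \<le> y} = {p. prime p \<and> P \<le> p \<and> real p \<le> y} \<union> {p. prime p \<and> p < P}"
    using assms(2) by auto
  let ?g = "\<lambda>p. 1 - 1 / real p"
  have small: "finite {p. prime p \<and> p < P}" by simp
  have fg: "?f p * ?g p = 1" if "prime p" for p
    using prime_ge_2_nat[OF that] by (auto simp: field_simps)
  have one: "(\<Prod>p | prime p \<and> p < P. ?f p * ?g p) = 1"
    by (intro prod.neutral) (simp add: fg)
  have "sifted_harmonic {p. prime p \<and> p < P} y \<le> (\<Prod>p | prime p \<and> P \<le> p \<and> real p \<le> y. ?f p)"
    by (rule sifted_harmonic_le_euler_product)
  also have "\<dots> = (\<Prod>p | prime p \<and> P \<le> p \<and> real p \<le> y. ?f p) * (\<Prod>p | prime p \<and> p < P. ?f p * ?g p)"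
    by (simp only: one mult_1_right)
  also have "\<dots> = (\<Prod>p | prime p \<and> real p \<le> y. ?f p) * (\<Prod>p | prime p \<and> p < P. ?g p)"
    unfolding split prod.distrib
    by (subst prod.union_disjoint) (use fin small in \<open>auto simp: split\<close>)
  also have "\<dots> \<le> exp 4 * (1 + ln y) * (\<Prod>p | prime p \<and> p < P. ?g p)"
    using assms(1)
    by (intro mult_right_mono prod_primes_inverse_le_ln prod_nonneg one_minus_inverse_prime_nonneg) auto
  finally show ?thesis .
qed

section \<open>The sets L_a\<close>

lemma gpf_greatest:
  assumes "a > 1"
  shows "prime (gpf a)" "gpf a dvd a" "\<And>p. prime p \<Longrightarrow> p dvd a \<Longrightarrow> p \<le> gpf a"
proof -
  obtain p where "prime p" "p dvd a" using assms prime_factor_nat[of a] by auto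
  then have "p \<in> prime_factors a" using assms by (auto simp: in_prime_factors_iff)
  then have "prime_factors a \<noteq> {}" by blast
  then have "gpf a \<in> prime_factors a" unfolding gpf_def by (intro Max_in) auto
  then show "prime (gpf a)" "gpf a dvd a" by (auto simp: in_prime_factors_iff)
  show "\<And>p. prime p \<Longrightarrow> p dvd a \<Longrightarrow> p \<le> gpf a"
    unfolding gpf_def using assms by (intro Max_ge) (auto simp: in_prime_factors_iff)
qed

lemma gpf_le: "a > 1 \<Longrightarrow> gpf a \<le> a"
  using gpf_greatest(2) by (intro dvd_imp_le) auto

lemma Lset_ge: "n \<in> Lset a \<Longrightarrow> a \<le> n"
  unfolding Lset_def by auto

lemma Lset_le_eq:
  assumes "a > 0"
  shows "{n \<in> Lset a. real n \<le> x} = (\<lambda>b. b * a) ` sifted {p. prime p \<and> p < gpf a} (x / a)"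
proof -
  have "(\<forall>p. prime p \<and> p dvd b \<longrightarrow> p \<ge> gpf a) \<longleftrightarrow> (\<forall>q\<in>{p. prime p \<and> p < gpf a}. \<not> q dvd b)"
    for b by (auto simp: not_le)
  moreover have "real (b * a) \<le> x \<longleftrightarrow> real b \<le> x / a" for b
    using assms by (simp add: field_simps)
  ultimately show ?thesis
    unfolding Lset_def sifted_def by (auto simp: Suc_le_eq)
qed

lemma sum_recip_Lset:
  assumes "a > 0"
  shows "(\<Sum>n | n \<in> Lset a \<and> real n \<le> x. 1 / real n)
    = sifted_harmonic {p. prime p \<and> p < gpf a} (x / a) / a"
  using assms unfolding Lset_le_eq[OF assms]
  by (subst sum.reindex) (auto simp: inj_on_def sifted_harmonic_def sum_divide_distrib)

definition partial_log_density :: "nat set \<Rightarrow> real \<Rightarrow> real" where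
  "partial_log_density N x = (1 / ln x) * (\<Sum>n | n \<in> N \<and> real n \<le> x. 1 / real n)"

lemma partial_log_density_nonneg: "x \<ge> 1 \<Longrightarrow> partial_log_density N x \<ge> 0"
  unfolding partial_log_density_def by (intro mult_nonneg_nonneg sum_nonneg) auto

lemma partial_log_density_le:
  assumes "0 \<notin> N" "x > 1"
  shows "partial_log_density N x \<le> 1 + 1 / ln x"
proof -
  have "{n. n \<in> N \<and> real n \<le> x} \<subseteq> sifted {} x"
  proof
    fix n assume n: "n \<in> {n. n \<in> N \<and> real n \<le> x}"
    with assms(1) show "n \<in> sifted {} x" by (cases n) (auto simp: sifted_def)
  qed
  then have "(\<Sum>n | n \<in> N \<and> real n \<le> x. 1 / real n) \<le> sifted_harmonic {} x"
    unfolding sifted_harmonic_def by (intro sum_mono2 finite_sifted) auto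
  also have "\<dots> \<le> 1 + ln x" using assms(2) by (simp add: sifted_harmonic_empty_bounds)
  finally show ?thesis
    using assms(2) by (simp add: partial_log_density_def field_simps)
qed

lemma dL_nonneg: "dL a \<ge> 0"
  unfolding dL_def by (intro mult_nonneg_nonneg prod_nonneg one_minus_inverse_prime_nonneg) auto

lemma partial_log_density_Lset:
  assumes "a > 0"
  shows "partial_log_density (Lset a) x
    = sifted_harmonic {p. prime p \<and> p < gpf a} (x / a) / ln x / a"
  using assms by (simp add: partial_log_density_def sum_recip_Lset)

lemma partial_log_density_Lset_tendsto:
  assumes "a > 0"
  shows "(partial_log_density (Lset a) \<longlongrightarrow> dL a) at_top"
proof -
  let ?Q = "{p. prime p \<and> p < gpf a}"
  have "((\<lambda>y. sifted_harmonic ?Q y / ln y) \<longlongrightarrow> (\<Prod>p\<in>?Q. 1 - 1 / real p)) at_top"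
    by (intro sifted_harmonic_asymp) auto
  then have "((\<lambda>x. sifted_harmonic ?Q (x / a) / ln x / a) \<longlongrightarrow> (\<Prod>p\<in>?Q. 1 - 1 / real p) / a) at_top"
    using assms by (intro tendsto_divide tendsto_over_ln_rescale) auto
  moreover have "partial_log_density (Lset a) = (\<lambda>x. sifted_harmonic ?Q (x / a) / ln x / a)"
    using partial_log_density_Lset[OF assms] by blast
  ultimately show ?thesis by (simp add: dL_def)
qed

lemma partial_log_density_Lset_le:
  assumes "a > 1" "x \<ge> exp 1"
  shows "partial_log_density (Lset a) x \<le> 2 * exp 4 * dL a"
proof -
  let ?W = "\<Prod>p | prime p \<and> p < gpf a. 1 - 1 / real p"
  have x: "x \<ge> 2" "ln x \<ge> 1"
    using assms(2) exp_ge_add_one_self[of 1] by (auto simp: ln_ge_iff)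
  have W: "?W \<ge> 0" by (intro prod_nonneg one_minus_inverse_prime_nonneg) auto
  have "sifted_harmonic {p. prime p \<and> p < gpf a} (x / a) \<le> exp 4 * (1 + ln x) * ?W"
  proof (cases "real a \<le> x")
    case True
    have "sifted_harmonic {p. prime p \<and> p < gpf a} (x / a)
        \<le> sifted_harmonic {p. prime p \<and> p < gpf a} x"
      using assms(1) x by (intro sifted_harmonic_mono) (simp add: field_simps)
    also have "\<dots> \<le> exp 4 * (1 + ln x) * ?W"
      using True gpf_le[OF assms(1)] x by (intro sifted_harmonic_le_ln) auto
    finally show ?thesis .
  next
    case False
    have "\<not> real b \<le> x / a" if "b > 0" for b
    proof -
      have "x < real a" using False by simp
      also have "\<dots> \<le> real b * real a" using that by (cases b) (auto simp: algebra_simps)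
      finally show ?thesis using assms(1) by (simp add: field_simps)
    qed
    then have "sifted {p. prime p \<and> p < gpf a} (x / a) = {}"
      by (auto simp: sifted_def)
    then show ?thesis using x W by (simp add: sifted_harmonic_def)
  qed
  then have "partial_log_density (Lset a) x \<le> exp 4 * ((1 + ln x) / ln x) * dL a"
    using assms(1) x by (simp add: partial_log_density_Lset dL_def field_simps divide_right_mono)
  also have "\<dots> \<le> exp 4 * 2 * dL a"
    using x dL_nonneg[of a] by (intro mult_right_mono mult_left_mono) (auto simp: field_simps)
  finally show ?thesis by simp
qed

section \<open>Disjointness of the sets L_a\<close>

lemma multiplicity_Lset_small:
  assumes "n \<in> Lset a" "a > 0" "prime p" "p < gpf a"
  shows "multiplicity p n = multiplicity p a"
proof -
  obtain b where b: "n = b * a" "b \<ge> 1" "\<forall>q. prime q \<and> q dvd b \<longrightarrow> q \<ge> gpf a"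
    using assms(1) unfolding Lset_def by blast
  then have "\<not> p dvd b" using assms(3,4) by (auto simp: not_le[symmetric])
  then show ?thesis
    using b assms(2,3)
    by (simp add: prime_elem_multiplicity_mult_distrib not_dvd_imp_multiplicity_0)
qed

lemma mem_LsetI:
  assumes "a > 0" "a dvd a'" "a' > 0"
    and same: "\<And>p. prime p \<Longrightarrow> p < gpf a \<Longrightarrow> multiplicity p a' = multiplicity p a"
  shows "a' \<in> Lset a"
proof -
  obtain c where c: "a' = c * a" using assms(2) by (metis dvdE mult.commute)
  have c_pos: "c > 0" using c assms(3) by (cases c) auto
  have "p \<ge> gpf a" if p: "prime p" "p dvd c" for p
  proof (rule ccontr)
    assume "\<not> p \<ge> gpf a"
    then have "multiplicity p a' = multiplicity p a" using same p by simp
    moreover have "multiplicity p a' = multiplicity p c + multiplicity p a"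
      using c c_pos assms(1) p by (simp add: prime_elem_multiplicity_mult_distrib)
    moreover have "multiplicity p c > 0"
      using p c_pos by (simp add: prime_multiplicity_gt_zero_iff)
    ultimately show False by simp
  qed
  then show ?thesis using c c_pos unfolding Lset_def by (auto simp: Suc_le_eq)
qed

lemma Lset_common_imp_mem:
  assumes a: "a > 1" "a' > 1" and n: "n \<in> Lset a" "n \<in> Lset a'"
    and order: "gpf a < gpf a' \<or> gpf a = gpf a' \<and> multiplicity (gpf a) a \<le> multiplicity (gpf a) a'"
  shows "a' \<in> Lset a"
proof (rule mem_LsetI)
  show "a > 0" "a' > 0" using a by auto
  have n_pos: "n > 0" using n(1) a(1) Lset_ge[of n a] by simp
  have same: "multiplicity p a' = multiplicity p a" if "prime p" "p < gpf a" for p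
    using that order multiplicity_Lset_small[OF n(1)] multiplicity_Lset_small[OF n(2)] a by force
  then show "\<And>p. prime p \<Longrightarrow> p < gpf a \<Longrightarrow> multiplicity p a' = multiplicity p a" .
  show "a dvd a'"
  proof (rule multiplicity_le_imp_dvd)
    fix p :: nat assume p: "prime p"
    consider "p < gpf a" | "p = gpf a" | "p > gpf a" by linarith
    then show "multiplicity p a \<le> multiplicity p a'"
    proof cases
      case 1
      then show ?thesis using same p by simp
    next
      case 2
      show ?thesis
      proof (cases "gpf a = gpf a'")
        case False
        then have "multiplicity p a' = multiplicity p n"
          using 2 order multiplicity_Lset_small[OF n(2)] a p by auto
        moreover have "multiplicity p a \<le> multiplicity p n"
          using n(1) n_pos by (intro dvd_imp_multiplicity_le) (auto simp: Lset_def)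
        ultimately show ?thesis by simp
      qed (use 2 order in auto)
    next
      case 3
      then have "\<not> p dvd a" using gpf_greatest(3)[OF a(1) p] by force
      then show ?thesis by (simp add: not_dvd_imp_multiplicity_0)
    qed
  qed (use a in auto)
qed

lemma L_primitive_disjoint:
  assumes "\<forall>a\<in>A. a > 1" "L_primitive A"
  shows "disjoint_family_on Lset A"
  unfolding disjoint_family_on_def
proof (intro ballI impI)
  fix a a' assume aa: "a \<in> A" "a' \<in> A" "a \<noteq> a'"
  show "Lset a \<inter> Lset a' = {}"
  proof (rule ccontr)
    assume "Lset a \<inter> Lset a' \<noteq> {}"
    then obtain n where n: "n \<in> Lset a" "n \<in> Lset a'" by blast
    have a: "a > 1" "a' > 1" using assms(1) aa by auto
    have "a' \<notin> Lset a" "a \<notin> Lset a'" using assms(2) aa unfolding L_primitive_def by auto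
    then show False
      using Lset_common_imp_mem[OF a n] Lset_common_imp_mem[OF a(2,1) n(2,1)]
      by (metis le_cases nat_neq_iff)
  qed
qed

section \<open>Logarithmic density of L_A\<close>

lemma tendsto_sum_truncated_has_sum:
  fixes g :: "nat \<Rightarrow> real \<Rightarrow> 'a :: {real_normed_algebra, banach}"
  assumes S: "(d has_sum S) A"
    and lim: "\<And>a. a \<in> A \<Longrightarrow> (g a \<longlongrightarrow> d a) at_top"
    and M: "M summable_on A"
    and bound: "\<forall>\<^sub>F x in at_top. \<forall>a\<in>A. norm (g a x) \<le> M a"
  shows "((\<lambda>x. \<Sum>a | a \<in> A \<and> real a \<le> x. g a x) \<longlongrightarrow> S) at_top"
proof -
  \<comment> \<open>Extending by zero reduces this to Tannery's theorem for series.\<close>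
  define h where "h a x = (if a \<in> A \<and> real a \<le> x then g a x else 0)" for a x
  define d' where "d' a = (if a \<in> A then d a else 0)" for a
  define M' where "M' a = (if a \<in> A then M a else 0)" for a
  have "(h a \<longlongrightarrow> d' a) at_top" for a
  proof (cases "a \<in> A")
    case True
    have "\<forall>\<^sub>F x in at_top. g a x = h a x"
      using eventually_ge_at_top[of "real a"] by eventually_elim (simp add: h_def True)
    with lim[OF True] show ?thesis by (simp add: d'_def True Lim_transform_eventually)
  next
    case False
    then have "h a = (\<lambda>_. 0)" by (simp add: h_def fun_eq_iff)
    with False show ?thesis by (simp add: d'_def)
  qed
  moreover have "\<forall>\<^sub>F x in at_top. \<forall>a. norm (h a x) \<le> M' a"
    using bound by eventually_elim (auto simp: h_def M'_def intro: order.trans[OF norm_ge_zero])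
  then have "\<forall>\<^sub>F (a, x) in sequentially \<times>\<^sub>F at_top. \<forall>a. norm (h a x) \<le> M' a"
    by (simp add: eventually_prod2)
  then have "\<forall>\<^sub>F (a, x) in sequentially \<times>\<^sub>F at_top. norm (h a x) \<le> M' a"
    by (rule eventually_mono) auto
  moreover have "summable M'"
    using M unfolding M'_def
    by (intro summable_on_imp_summable)
      (auto elim!: summable_on_cong_neutral[THEN iffD1, rotated -1])
  ultimately have "((\<lambda>x. \<Sum>a. h a x) \<longlongrightarrow> suminf d') at_top"
    using tannerys_theorem[of h d' at_top M'] by auto
  moreover have "(\<Sum>a. h a x) = (\<Sum>a | a \<in> A \<and> real a \<le> x. g a x)" for x
    using finite_nat_le_real[of "\<lambda>a. a \<in> A" x] by (subst suminf_finite) (auto simp: h_def)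
  moreover have "(d' has_sum S) UNIV"
    using S by (subst has_sum_cong_neutral[where T = A and g = d]) (auto simp: d'_def)
  then have "suminf d' = S" by (metis has_sum_imp_sums sums_unique)
  ultimately show ?thesis by simp
qed

lemma partial_log_density_LsetA:
  assumes "finite F" "disjoint_family_on Lset F"
  shows "partial_log_density (LsetA F) x = (\<Sum>a\<in>F. partial_log_density (Lset a) x)"
proof -
  have "{n. n \<in> LsetA F \<and> real n \<le> x} = (\<Union>a\<in>F. {n. n \<in> Lset a \<and> real n \<le> x})"
    by (auto simp: LsetA_def)
  moreover have "(\<Sum>n\<in>(\<Union>a\<in>F. {n. n \<in> Lset a \<and> real n \<le> x}). 1 / real n)
      = (\<Sum>a\<in>F. \<Sum>n | n \<in> Lset a \<and> real n \<le> x. 1 / real n)"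
    using assms finite_nat_le_real
    by (intro sum.UNION_disjoint) (auto simp: disjoint_family_on_def)
  ultimately show ?thesis by (simp add: partial_log_density_def sum_distrib_left)
qed

lemma partial_log_density_LsetA_truncate:
  "partial_log_density (LsetA A) x = partial_log_density (LsetA {a \<in> A. real a \<le> x}) x"
proof -
  have "real a \<le> x" if "n \<in> Lset a" "real n \<le> x" for a n
    using Lset_ge[OF that(1)] that(2) by (meson of_nat_le_iff order_trans)
  then have "{n. n \<in> LsetA A \<and> real n \<le> x} = {n. n \<in> LsetA {a \<in> A. real a \<le> x} \<and> real n \<le> x}"
    by (auto simp: LsetA_def)
  then show ?thesis by (simp add: partial_log_density_def)
qed

lemma sum_partial_log_density_Lset:
  assumes "disjoint_family_on Lset A"
  shows "(\<Sum>a | a \<in> A \<and> real a \<le> x. partial_log_density (Lset a) x)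
    = partial_log_density (LsetA A) x"
proof -
  have "(\<Sum>a | a \<in> A \<and> real a \<le> x. partial_log_density (Lset a) x)
      = partial_log_density (LsetA {a \<in> A. real a \<le> x}) x"
    using finite_nat_le_real[of "\<lambda>a. a \<in> A" x] disjoint_family_on_mono[OF _ assms]
    by (intro partial_log_density_LsetA[symmetric]) auto
  also have "\<dots> = partial_log_density (LsetA A) x"
    by (rule partial_log_density_LsetA_truncate[symmetric])
  finally show ?thesis .
qed

lemma zero_notin_LsetA: "\<forall>a\<in>A. a > 0 \<Longrightarrow> 0 \<notin> LsetA A"
  by (auto simp: LsetA_def dest: Lset_ge)

lemma sum_dL_le_one:
  assumes F: "finite F" "\<forall>a\<in>F. a > 1" "disjoint_family_on Lset F"
  shows "sum dL F \<le> 1"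
proof (rule tendsto_le[OF trivial_limit_at_top_linorder])
  show "((\<lambda>x. \<Sum>a\<in>F. partial_log_density (Lset a) x) \<longlongrightarrow> sum dL F) at_top"
    using F(2) by (intro tendsto_sum partial_log_density_Lset_tendsto) auto
  show "((\<lambda>x::real. 1 + 1 / ln x) \<longlongrightarrow> 1) at_top" by real_asymp
  have zero: "0 \<notin> LsetA F" using F(2) by (intro zero_notin_LsetA) force
  show "\<forall>\<^sub>F x in at_top. (\<Sum>a\<in>F. partial_log_density (Lset a) x) \<le> 1 + 1 / ln x"
    using eventually_gt_at_top[of 1] by eventually_elim
      (simp add: partial_log_density_le[OF zero] flip: partial_log_density_LsetA[OF F(1,3)])
qed

lemma eventually_partial_log_density_Lset_le:
  assumes "\<forall>a\<in>A. a > 1"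
  shows "\<forall>\<^sub>F x in at_top. \<forall>a\<in>A. norm (partial_log_density (Lset a) x) \<le> 2 * exp 4 * dL a"
  using eventually_ge_at_top[of "exp 1"]
proof eventually_elim
  case (elim x)
  have "(1 :: real) \<le> exp 1" by simp
  then have "partial_log_density (Lset a) x \<ge> 0" for a
    using elim by (intro partial_log_density_nonneg) linarith
  then show ?case
    using elim assms partial_log_density_Lset_le by simp
qed

theorem lemma6p2:
  fixes A :: "nat set"
  assumes "\<forall>a\<in>A. a > 1"
    and "L_primitive A"
  shows "\<exists>S. (dL has_sum S) A \<and>
           ((\<lambda>x::real. (1 / ln x) * (\<Sum>n\<in>{n\<in>LsetA A. real n \<le> x}. 1 / real n))
              \<longlongrightarrow> S) at_top"
proof -
  have disjoint: "disjoint_family_on Lset A" using L_primitive_disjoint[OF assms] .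
  have summable: "dL summable_on A"
  proof (rule nonneg_bdd_above_summable_on)
    show "bdd_above (sum dL ` {F. F \<subseteq> A \<and> finite F})"
      using assms(1) disjoint_family_on_mono[OF _ disjoint]
      by (intro bdd_aboveI[of _ 1]) (auto intro!: sum_dL_le_one)
  qed (rule dL_nonneg)
  then have S: "(dL has_sum infsum dL A) A" by simp
  have "((\<lambda>x. \<Sum>a | a \<in> A \<and> real a \<le> x. partial_log_density (Lset a) x) \<longlongrightarrow> infsum dL A) at_top"
  proof (rule tendsto_sum_truncated_has_sum[OF S])
    show "(partial_log_density (Lset a) \<longlongrightarrow> dL a) at_top" if "a \<in> A" for a
      using assms(1) that by (intro partial_log_density_Lset_tendsto) auto
    show "(\<lambda>a. 2 * exp 4 * dL a) summable_on A"
      using summable by (rule summable_on_cmult_right)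
  qed (rule eventually_partial_log_density_Lset_le[OF assms(1)])
  then have "(partial_log_density (LsetA A) \<longlongrightarrow> infsum dL A) at_top"
    by (simp add: sum_partial_log_density_Lset[OF disjoint])
  with S show ?thesis unfolding partial_log_density_def by blast
qed

end
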